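(* Let $G=(V,E)$ be an unweighted undirected graph, let $s\in V$ be a source, and suppose we are given, for every $v\in V$, the distance $d_s(v)$ from $s$, the number $\sigma_s(v)$ of shortest $s$-$v$ paths, and the list $P_s(v)$ of predecessors of $v$ (neighbors immediately preceding $v$ on shortest $s$-$v$ paths) in $G$. Let $\beta$ be a batch of edge insertions and let $d_{max}$ be the maximum distance from $s$ (the distance of the node furthest from $s$). Consider the algorithm \textsf{UpdateSSSP}, which assumes all nodes are initially colored white: (i) Create an array $Q[\,]$ of $d_{max}$ empty FIFO queues. For each $e=\{u,v\}\in\beta$: insert $e$ into $E$; if $d_s(u)<d_s(v)$, enqueue $v$ into $Q[d_s(u)+1]$; if $d_s(v)<d_s(u)$, enqueue $u$ into $Q[d_s(v)+1]$. (ii) For $k=1,2,\dots$ while $k<d_{max}$: while $Q[k]$ is nonempty, dequeue $w$ from $Q[k]$; if $w$ is black, skip it; otherwise color $w$ black, set $d_s(w)\leftarrow k$, $P_s(w)\leftarrow\emptyset$, $\sigma_s(w)\leftarrow 0$, and for each incident edge $\{z,w\}$: if $d_s(w)=d_s(z)+1$, add $z$ to $P_s(w)$ and set $\sigma_s(w)\leftarrow\sigma_s(w)+\sigma_s(z)$; if $z$ is white and $d_s(z)\ge d_s(w)+1$, color $z$ gray and enqueue $z$ into $Q[k+1]$. (iii) Reset to white all nodes that have been in some queue. Then the time required by \textsf{UpdateSSSP} to update the distances, the numbers of shortest paths and the lists of predecessors is $O(|\beta|+\|A\|+d_{max})$.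
   Context: $A$ denotes the set of affected nodes, i.e. nodes whose distance from $s$ or whose number of shortest paths from $s$ changes as a consequence of inserting the batch $\beta$; $\|A\|$ denotes $|A|$ plus the number of edges having at least one endpoint in $A$; $|\beta|$ is the number of edges in the batch. *)

theory Defs
  imports Main "HOL-Library.Extended_Nat"
begin

text \<open>An unweighted undirected graph on vertex set V (of type nat) is given by a set E
of 2-element subsets of V.\<close>

definition is_walk :: "nat set set \<Rightarrow> nat list \<Rightarrow> bool" where
  "is_walk E p \<longleftrightarrow> p \<noteq> [] \<and> (\<forall>i. Suc i < length p \<longrightarrow> {p ! i, p ! Suc i} \<in> E)"

definition walks :: "nat set set \<Rightarrow> nat \<Rightarrow> nat \<Rightarrow> nat list set" where
  "walks E s v = {p. is_walk E p \<and> hd p = s \<and> last p = v}"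

text \<open>distance d_s(v) (infinity if v is unreachable)\<close>
definition gdist :: "nat set set \<Rightarrow> nat \<Rightarrow> nat \<Rightarrow> enat" where
  "gdist E s v = (INF p \<in> walks E s v. enat (length p - 1))"

definition nsp :: "nat set set \<Rightarrow> nat \<Rightarrow> nat \<Rightarrow> nat" where
  "nsp E s v = card {p \<in> walks E s v. enat (length p - 1) = gdist E s v}"

definition preds :: "nat set set \<Rightarrow> nat \<Rightarrow> nat \<Rightarrow> nat set" where
  "preds E s v = {u. {u, v} \<in> E \<and> gdist E s v \<noteq> \<infinity> \<and> gdist E s u + 1 = gdist E s v}"

definition max_dist :: "nat set \<Rightarrow> nat set set \<Rightarrow> nat \<Rightarrow> nat" where
  "max_dist V E s = Max {the_enat (gdist E s v) | v. v \<in> V \<and> gdist E s v \<noteq> \<infinity>}"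

definition batch_edges :: "(nat \<times> nat) list \<Rightarrow> nat set set" where
  "batch_edges \<beta> = {{u, v} | u v. (u, v) \<in> set \<beta>}"

definition affected :: "nat set \<Rightarrow> nat set set \<Rightarrow> nat \<Rightarrow> (nat \<times> nat) list \<Rightarrow> nat set" where
  "affected V E s \<beta> = {v \<in> V. gdist E s v \<noteq> gdist (E \<union> batch_edges \<beta>) s v
                          \<or> nsp E s v \<noteq> nsp (E \<union> batch_edges \<beta>) s v}"

definition anorm :: "nat set \<Rightarrow> nat set set \<Rightarrow> nat \<Rightarrow> (nat \<times> nat) list \<Rightarrow> nat" where
  "anorm V E s \<beta> = card (affected V E s \<beta>)
     + card {e \<in> E \<union> batch_edges \<beta>. e \<inter> affected V E s \<beta> \<noteq> {}}"

datatype color = White | Gray | Black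

record st =
  col :: "nat \<Rightarrow> color"
  dd :: "nat \<Rightarrow> enat"
  sg :: "nat \<Rightarrow> nat"
  pr :: "nat \<Rightarrow> nat set"
  qs :: "nat \<Rightarrow> nat list"
  touched :: "nat set"
  cost :: nat

text \<open>enqueue z into Q[i] (constant time, charged by the caller)\<close>
definition enq :: "nat \<Rightarrow> nat \<Rightarrow> st \<Rightarrow> st" where
  "enq i z S = S\<lparr>qs := (qs S)(i := qs S i @ [z]), touched := insert z (touched S)\<rparr>"

text \<open>step (i) for one batch edge {u,v}: insert it (unit cost) and enqueue\<close>
definition phase1_step :: "nat \<times> nat \<Rightarrow> st \<Rightarrow> st" where
  "phase1_step e S = (case e of (u, v) \<Rightarrow>
     let S1 = S\<lparr>cost := cost S + 1\<rparr>;
         S2 = (if dd S u < dd S v then enq (the_enat (dd S u) + 1) v S1 else S1)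
     in if dd S v < dd S u then enq (the_enat (dd S v) + 1) u S2 else S2)"

definition neighbors :: "nat set set \<Rightarrow> nat \<Rightarrow> nat list" where
  "neighbors E w = sorted_list_of_set {z. {z, w} \<in> E}"

definition scan :: "nat \<Rightarrow> nat \<Rightarrow> nat \<Rightarrow> st \<Rightarrow> st" where
  "scan k w z S =
     (let S0 = S\<lparr>cost := cost S + 1\<rparr>;
          S1 = (if dd S0 w = dd S0 z + 1
                then S0\<lparr>pr := (pr S0)(w := insert z (pr S0 w)), sg := (sg S0)(w := sg S0 w + sg S0 z)\<rparr>
                else S0)
      in if col S1 z = White \<and> dd S1 z \<ge> dd S1 w + 1
         then enq (Suc k) z (S1\<lparr>col := (col S1)(z := Gray)\<rparr>)
         else S1)"

definition process :: "nat set set \<Rightarrow> nat \<Rightarrow> nat \<Rightarrow> st \<Rightarrow> st" where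
  "process E k w S =
     (if col S w = Black then S\<lparr>cost := cost S + 1\<rparr>
      else fold (scan k w) (neighbors E w)
             (S\<lparr>cost := cost S + 1, col := (col S)(w := Black), dd := (dd S)(w := enat k),
                pr := (pr S)(w := {}), sg := (sg S)(w := 0)\<rparr>))"

text \<open>one iteration of the outer loop of step (ii): empty Q[k]. Nodes are only
  enqueued into Q[k+1] meanwhile, so this is the while-loop over the contents of Q[k].\<close>
definition level :: "nat set set \<Rightarrow> nat \<Rightarrow> st \<Rightarrow> st" where
  "level E k S = (let S' = fold (process E k) (qs S k) (S\<lparr>cost := cost S + 1\<rparr>)
                  in S'\<lparr>qs := (qs S')(k := [])\<rparr>)"

text \<open>UpdateSSSP: E is the edge set after insertion of the batch; creating Q costs dmax;
  step (iii) costs one unit per node that has been in some queue.\<close>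
definition update_sssp :: "nat set set \<Rightarrow> (nat \<times> nat) list \<Rightarrow> (nat \<Rightarrow> enat) \<Rightarrow> (nat \<Rightarrow> nat)
    \<Rightarrow> (nat \<Rightarrow> nat set) \<Rightarrow> nat \<Rightarrow> st" where
  "update_sssp E \<beta> d \<sigma> P dmax =
     (let S0 = \<lparr>col = (\<lambda>_. White), dd = d, sg = \<sigma>, pr = P, qs = (\<lambda>_. []), touched = {}, cost = dmax\<rparr>;
          S1 = fold phase1_step \<beta> S0;
          S2 = fold (level E) [1..<dmax] S1
      in S2\<lparr>col := (\<lambda>x. if x \<in> touched S2 then White else col S2 x),
            cost := cost S2 + card (touched S2)\<rparr>)"

end

theory Submission
  imports Defs
begin

text \<open>Every node that is ever enqueued into Q[j] is the endpoint of a walk of length j from s in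
  the new graph that uses an inserted edge, and j is at most its old distance. Such a node is
  affected: either its distance drops, or that walk is an additional shortest path. Hence only
  affected nodes are ever queued or coloured, and a node that is coloured black scans its
  incident edges exactly once. Every dequeue is paid for by an enqueue, and every enqueue
  happens either in step (i), at most twice per batch edge, or while scanning an edge. Weighing
  the cost plus the number of pending queue entries against twice the degree sum of the black
  nodes gives the bound d_max + 3|\<beta>| + d_max + 4||A|| + |A|.\<close>

lemma is_walk_snoc: "is_walk F p \<Longrightarrow> {last p, z} \<in> F \<Longrightarrow> is_walk F (p @ [z])"
  unfolding is_walk_def
proof (intro conjI allI impI)
  fix i
  assume p: "p \<noteq> [] \<and> (\<forall>i. Suc i < length p \<longrightarrow> {p ! i, p ! Suc i} \<in> F)"
    and z: "{last p, z} \<in> F" and i: "Suc i < length (p @ [z])"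
  show "{(p @ [z]) ! i, (p @ [z]) ! Suc i} \<in> F"
  proof (cases "Suc i < length p")
    case True
    then show ?thesis using p by (simp add: nth_append)
  next
    case False
    then have "i = length p - 1" "Suc i = length p" using i by simp_all
    then show ?thesis using p z by (simp add: nth_append last_conv_nth)
  qed
qed simp

lemma is_walk_snocD: "is_walk F (p @ [z]) \<Longrightarrow> p \<noteq> [] \<Longrightarrow> is_walk F p"
  unfolding is_walk_def
proof (intro conjI allI impI)
  fix i
  assume "p @ [z] \<noteq> [] \<and> (\<forall>i. Suc i < length (p @ [z]) \<longrightarrow> {(p @ [z]) ! i, (p @ [z]) ! Suc i} \<in> F)"
    and i: "Suc i < length p"
  then have "{(p @ [z]) ! i, (p @ [z]) ! Suc i} \<in> F" by simp
  then show "{p ! i, p ! Suc i} \<in> F" using i by (simp add: nth_append)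
qed

lemma is_walk_mono: "is_walk F p \<Longrightarrow> F \<subseteq> F' \<Longrightarrow> is_walk F' p"
  unfolding is_walk_def by blast

lemma gdist_le_length: "p \<in> walks F s v \<Longrightarrow> gdist F s v \<le> enat (length p - 1)"
  unfolding gdist_def by (rule INF_lower)

lemma gdist_attained:
  assumes "gdist F s v \<noteq> \<infinity>"
  obtains p where "p \<in> walks F s v" "enat (length p - 1) = gdist F s v"
proof -
  have "walks F s v \<noteq> {}" using assms unfolding gdist_def by (auto simp: top_enat_def)
  then obtain q where "q \<in> walks F s v" by auto
  then have "gdist F s v \<in> (\<lambda>p. enat (length p - 1)) ` walks F s v"
    unfolding gdist_def by (intro wellorder_InfI) auto
  then show ?thesis using that by auto
qed

lemma sum_card_incidences_le:
  assumes "finite B" "finite F" "\<And>e. e \<in> F \<Longrightarrow> finite e \<and> card e \<le> 2"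
  shows "(\<Sum>x\<in>B. card {e \<in> F. x \<in> e}) \<le> 2 * card F"
proof -
  have "(\<Sum>x\<in>B. card {e \<in> F. x \<in> e}) = (\<Sum>x\<in>B. \<Sum>e\<in>F. if x \<in> e then 1 else 0)"
    using assms(2) by (simp add: sum.inter_filter[symmetric])
  also have "\<dots> = (\<Sum>e\<in>F. \<Sum>x\<in>B. if x \<in> e then 1 else 0)"
    by (rule sum.swap)
  also have "\<dots> = (\<Sum>e\<in>F. card (B \<inter> e))"
    using assms(1) by (simp add: sum.inter_filter[symmetric] Int_def)
  also have "\<dots> \<le> (\<Sum>e\<in>F. 2)"
  proof (rule sum_mono)
    fix e assume e: "e \<in> F"
    show "card (B \<inter> e) \<le> 2" using assms(3)[OF e] card_mono[of e "B \<inter> e"] by simp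
  qed
  finally show ?thesis by simp
qed

lemma fold_amortized:
  fixes a b :: "'s \<Rightarrow> nat"
  assumes "\<And>x S. x \<in> set xs \<Longrightarrow> I S \<Longrightarrow> I (f x S) \<and> a (f x S) + b S \<le> a S + c + b (f x S)"
    and "I S"
  shows "I (fold f xs S) \<and> a (fold f xs S) + b S \<le> a S + c * length xs + b (fold f xs S)"
  using assms
proof (induction xs arbitrary: S)
  case (Cons x xs)
  then have "I (f x S) \<and> a (f x S) + b S \<le> a S + c + b (f x S)" by simp
  moreover have "I (fold f xs (f x S))
      \<and> a (fold f xs (f x S)) + b (f x S) \<le> a (f x S) + c * length xs + b (fold f xs (f x S))"
    using Cons.IH Cons.prems calculation by simp
  ultimately show ?case by simp
qed simp

lemma sum_qs_enq_le:
  "finite I \<Longrightarrow> (\<Sum>j\<in>I. length (qs (enq i z S) j)) \<le> (\<Sum>j\<in>I. length (qs S j)) + 1"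
proof -
  assume I: "finite I"
  have "(\<Sum>j\<in>I. length (qs (enq i z S) j)) = (\<Sum>j\<in>I. length (qs S j) + (if j = i then 1 else 0))"
    by (rule sum.cong) (simp_all add: enq_def)
  also have "\<dots> = (\<Sum>j\<in>I. length (qs S j)) + (if i \<in> I then 1 else 0)"
    using I by (simp add: sum.distrib)
  finally show ?thesis by simp
qed

lemma scan_simps:
  "dd (scan k w z S) = dd S" "cost (scan k w z S) = Suc (cost S)"
  "col (scan k w z S) x = Black \<longleftrightarrow> col S x = Black"
  by (simp_all add: scan_def Let_def enq_def)

lemma scan_cases:
  obtains (enqueue) R where "scan k w z S = enq (Suc k) z R"
      "col S z = White" "dd S w + 1 \<le> dd S z"
      "qs R = qs S" "touched R = touched S" "col R = (col S)(z := Gray)" "dd R = dd S"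
  | (skip) "qs (scan k w z S) = qs S" "touched (scan k w z S) = touched S"
      "col (scan k w z S) = col S" "dd (scan k w z S) = dd S"
proof -
  define S1 where "S1 = (let S0 = S\<lparr>cost := cost S + 1\<rparr> in
    if dd S0 w = dd S0 z + 1
    then S0\<lparr>pr := (pr S0)(w := insert z (pr S0 w)), sg := (sg S0)(w := sg S0 w + sg S0 z)\<rparr>
    else S0)"
  have scan: "scan k w z S = (if col S1 z = White \<and> dd S1 z \<ge> dd S1 w + 1
      then enq (Suc k) z (S1\<lparr>col := (col S1)(z := Gray)\<rparr>) else S1)"
    by (simp only: scan_def S1_def Let_def)
  have S1: "qs S1 = qs S" "touched S1 = touched S" "col S1 = col S" "dd S1 = dd S"
    by (simp_all add: S1_def Let_def)
  show ?thesis
  proof (cases "col S1 z = White \<and> dd S1 z \<ge> dd S1 w + 1")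
    case True
    then show ?thesis using enqueue[of "S1\<lparr>col := (col S1)(z := Gray)\<rparr>"] scan S1 by simp
  next
    case False
    then have "scan k w z S = S1" by (simp only: scan if_False)
    then show ?thesis by (intro skip) (simp_all add: S1)
  qed
qed

lemma Black_fold_scan:
  "col (fold (scan k w) zs S) x = Black \<longleftrightarrow> col S x = Black"
  by (induction zs arbitrary: S) (simp_all add: scan_simps)

lemma phase1_step_simps:
  "dd (phase1_step e S) = dd S" "col (phase1_step e S) = col S"
  "cost (phase1_step e S) = Suc (cost S)"
  by (simp_all add: phase1_step_def Let_def enq_def split: prod.split)

locale batch_insertion =
  fixes V :: "nat set" and E :: "nat set set" and s :: nat and \<beta> :: "(nat \<times> nat) list"
    and d :: "nat \<Rightarrow> enat" and dmax :: nat
  assumes finite_V: "finite V"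
    and E_subset: "E \<subseteq> {{u, v} | u v. u \<in> V \<and> v \<in> V \<and> u \<noteq> v}"
    and s_in_V: "s \<in> V"
    and batch_new: "\<forall>(u, v) \<in> set \<beta>. u \<in> V \<and> v \<in> V \<and> u \<noteq> v \<and> {u, v} \<notin> E"
    and d_eq_gdist: "\<forall>v \<in> V. d v = gdist E s v"
begin

definition E' :: "nat set set" where "E' = E \<union> batch_edges \<beta>"

definition A :: "nat set" where "A = affected V E s \<beta>"

lemma E'_subset: "E' \<subseteq> {{u, v} | u v. u \<in> V \<and> v \<in> V \<and> u \<noteq> v}"
proof -
  have "batch_edges \<beta> \<subseteq> {{u, v} | u v. u \<in> V \<and> v \<in> V \<and> u \<noteq> v}"
    using batch_new unfolding batch_edges_def by blast
  then show ?thesis using E_subset unfolding E'_def by blast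
qed

lemma finite_E': "finite E'"
proof (rule finite_subset[OF E'_subset])
  have "{{u, v} | u v. u \<in> V \<and> v \<in> V \<and> u \<noteq> v} \<subseteq> (\<lambda>(u, v). {u, v}) ` (V \<times> V)" by auto
  then show "finite {{u, v} | u v. u \<in> V \<and> v \<in> V \<and> u \<noteq> v}"
    using finite_V by (auto intro: finite_subset)
qed

lemma edge_E'_D: "{a, b} \<in> E' \<Longrightarrow> a \<in> V \<and> b \<in> V \<and> a \<noteq> b"
  using E'_subset by (auto simp: doubleton_eq_iff)

lemma walk_from_s_in_V: assumes "is_walk E' p" "hd p = s" shows "set p \<subseteq> V"
proof
  fix x assume "x \<in> set p"
  then obtain i where i: "i < length p" "p ! i = x" by (auto simp: in_set_conv_nth)
  show "x \<in> V"
  proof (cases i)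
    case 0
    then show ?thesis using i assms s_in_V by (auto simp: hd_conv_nth is_walk_def)
  next
    case (Suc j)
    then have "{p ! j, p ! i} \<in> E'" using assms(1) i unfolding is_walk_def by auto
    then show ?thesis using edge_E'_D i by blast
  qed
qed

lemma finite_A: "finite A"
  unfolding A_def affected_def using finite_V by simp

definition new_walk_to :: "nat \<Rightarrow> nat \<Rightarrow> bool" where
  "new_walk_to j x \<longleftrightarrow> x \<in> V \<and> enat j \<le> d x
     \<and> (\<exists>p \<in> walks E' s x. length p - 1 = j \<and> \<not> is_walk E p)"

text \<open>If the distance of x does not drop, the new walk is one more shortest walk, so
  the number of shortest walks grows.\<close>
lemma new_walk_to_affected:
  assumes "new_walk_to j x"
  shows "x \<in> A"
proof -
  obtain p where p: "p \<in> walks E' s x" "length p - 1 = j" "\<not> is_walk E p"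
    and x: "x \<in> V" and j: "enat j \<le> gdist E s x"
    using assms d_eq_gdist unfolding new_walk_to_def by auto
  have le: "gdist E' s x \<le> enat j" using gdist_le_length[OF p(1)] p(2) by simp
  show ?thesis
  proof (cases "gdist E s x = gdist E' s x")
    case False
    then show ?thesis unfolding A_def affected_def E'_def using x by auto
  next
    case True
    then have eq: "gdist E' s x = enat j" "gdist E s x = enat j" using le j by auto
    let ?old = "{p \<in> walks E s x. enat (length p - 1) = gdist E s x}"
    let ?new = "{p \<in> walks E' s x. enat (length p - 1) = gdist E' s x}"
    have "?old \<subseteq> ?new"
      using eq unfolding walks_def E'_def by (auto intro: is_walk_mono)
    moreover have "p \<in> ?new" "p \<notin> ?old" using p eq unfolding walks_def by auto
    moreover have "?new \<subseteq> {xs. set xs \<subseteq> V \<and> length xs = Suc j}"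
    proof
      fix q assume "q \<in> ?new"
      then have "is_walk E' q" "hd q = s" "length q - 1 = j" "q \<noteq> []"
        using eq unfolding walks_def is_walk_def by auto
      then show "q \<in> {xs. set xs \<subseteq> V \<and> length xs = Suc j}" using walk_from_s_in_V by auto
    qed
    then have "finite ?new" by (rule finite_subset) (rule finite_lists_length_eq[OF finite_V])
    ultimately have "card ?old < card ?new" by (intro psubset_card_mono) auto
    then show ?thesis unfolding A_def affected_def nsp_def E'_def using x by auto
  qed
qed

lemma new_walk_to_extend:
  assumes "new_walk_to k w" "{z, w} \<in> E'" "enat (Suc k) \<le> d z"
  shows "new_walk_to (Suc k) z"
proof -
  obtain p where p: "p \<in> walks E' s w" "length p - 1 = k" "\<not> is_walk E p"
    using assms(1) unfolding new_walk_to_def by blast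
  have p_ne: "p \<noteq> []" using p(1) unfolding walks_def is_walk_def by auto
  have "is_walk E' (p @ [z])"
    using p(1) assms(2) by (intro is_walk_snoc) (auto simp: walks_def insert_commute)
  then have "p @ [z] \<in> walks E' s z" using p(1) p_ne unfolding walks_def by simp
  moreover have "\<not> is_walk E (p @ [z])" using p(3) p_ne is_walk_snocD by blast
  moreover have "length (p @ [z]) - 1 = Suc k" using p(2) p_ne by (cases p) auto
  ultimately show ?thesis using assms(3) edge_E'_D[OF assms(2)] unfolding new_walk_to_def by blast
qed

lemma new_walk_to_batch_edge:
  assumes "(u, v) \<in> set \<beta> \<or> (v, u) \<in> set \<beta>" "d u < d v"
  shows "new_walk_to (the_enat (d u) + 1) v"
proof -
  have uv: "u \<in> V" "v \<in> V" "{u, v} \<notin> E"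
    using assms(1) batch_new by (auto simp: insert_commute)
  have "{u, v} \<in> E'"
    using assms(1) unfolding E'_def batch_edges_def using insert_commute by blast
  have "gdist E s u \<noteq> \<infinity>" using assms(2) d_eq_gdist uv(1) by (cases "d u") auto
  then obtain q where q: "q \<in> walks E s u" "enat (length q - 1) = gdist E s u"
    by (rule gdist_attained)
  have q_ne: "q \<noteq> []" and q_last: "last q = u"
    using q(1) unfolding walks_def is_walk_def by auto
  have "is_walk E' q" using q(1) unfolding walks_def E'_def by (auto intro: is_walk_mono)
  then have "is_walk E' (q @ [v])" using is_walk_snoc[of E' q v] \<open>{u, v} \<in> E'\<close> q_last by simp
  moreover have "\<not> is_walk E (q @ [v])"
  proof
    assume "is_walk E (q @ [v])"
    moreover have "Suc (length q - 1) < length (q @ [v])" using q_ne by simp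
    ultimately have "{(q @ [v]) ! (length q - 1), (q @ [v]) ! Suc (length q - 1)} \<in> E"
      unfolding is_walk_def by blast
    then show False using uv(3) q_ne q_last by (simp add: nth_append last_conv_nth)
  qed
  moreover have du: "d u = enat (length q - 1)" using q(2) d_eq_gdist uv(1) by simp
  then have "length (q @ [v]) - 1 = the_enat (d u) + 1" using q_ne by simp
  moreover have "enat (the_enat (d u) + 1) \<le> d v" using assms(2) du by (cases "d v") auto
  ultimately show ?thesis
    using q(1) q_ne uv(2) unfolding new_walk_to_def walks_def by auto
qed

lemma finite_neighbourhood: "finite {z. {z, w} \<in> E'}"
  by (rule finite_subset[OF _ finite_V]) (auto dest: edge_E'_D)

lemma set_neighbors: "set (neighbors E' w) = {z. {z, w} \<in> E'}"
  unfolding neighbors_def by (rule set_sorted_list_of_set[OF finite_neighbourhood])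

lemma sum_neighbors_le:
  assumes "B \<subseteq> A"
  shows "(\<Sum>x\<in>B. length (neighbors E' x)) \<le> 2 * card {e \<in> E'. e \<inter> A \<noteq> {}}"
proof -
  let ?F = "{e \<in> E'. e \<inter> A \<noteq> {}}"
  have "length (neighbors E' x) \<le> card {e \<in> ?F. x \<in> e}" if "x \<in> B" for x
  proof -
    have "length (neighbors E' x) = card {z. {z, x} \<in> E'}"
      unfolding neighbors_def by simp
    also have "\<dots> \<le> card {e \<in> ?F. x \<in> e}"
    proof (rule card_inj_on_le)
      show "inj_on (\<lambda>z. {z, x}) {z. {z, x} \<in> E'}" by (auto simp: inj_on_def doubleton_eq_iff)
      show "(\<lambda>z. {z, x}) ` {z. {z, x} \<in> E'} \<subseteq> {e \<in> ?F. x \<in> e}" using that assms by auto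
      show "finite {e \<in> ?F. x \<in> e}" using finite_E' by simp
    qed
    finally show ?thesis .
  qed
  then have "(\<Sum>x\<in>B. length (neighbors E' x)) \<le> (\<Sum>x\<in>B. card {e \<in> ?F. x \<in> e})"
    by (rule sum_mono)
  also have "\<dots> \<le> 2 * card ?F"
  proof (rule sum_card_incidences_le)
    show "finite B" using assms finite_A by (rule finite_subset)
    show "finite ?F" using finite_E' by simp
    show "finite e \<and> card e \<le> 2" if "e \<in> ?F" for e
      using that E'_subset by (auto simp: card_insert_if)
  qed
  finally show ?thesis .
qed

definition queue_inv :: "st \<Rightarrow> bool" where
  "queue_inv S \<longleftrightarrow> (\<forall>j x. x \<in> set (qs S j) \<longrightarrow> new_walk_to j x) \<and> touched S \<subseteq> A
     \<and> {x. col S x = Black} \<subseteq> A \<and> (\<forall>x. col S x \<noteq> Black \<longrightarrow> dd S x = d x)"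

definition pending :: "nat \<Rightarrow> st \<Rightarrow> nat" where
  "pending m S = (\<Sum>j\<in>{m..<dmax}. length (qs S j))"

definition scan_credit :: "st \<Rightarrow> nat" where
  "scan_credit S = 2 * (\<Sum>x | col S x = Black. length (neighbors E' x))"

lemma pending_enq_le: "pending m (enq i z S) \<le> pending m S + 1"
  unfolding pending_def by (rule sum_qs_enq_le) simp

lemma queue_inv_enq: "queue_inv S \<Longrightarrow> new_walk_to i z \<Longrightarrow> queue_inv (enq i z S)"
  unfolding queue_inv_def enq_def using new_walk_to_affected by auto

lemma finite_Black: "queue_inv S \<Longrightarrow> finite {x. col S x = Black}"
  unfolding queue_inv_def using finite_A finite_subset by blast

lemma scan_step:
  assumes inv: "queue_inv S" and w: "dd S w = enat k" "new_walk_to k w" and e: "{z, w} \<in> E'"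
  shows "queue_inv (scan k w z S) \<and> pending (Suc k) (scan k w z S) \<le> pending (Suc k) S + 1"
proof (cases k w z S rule: scan_cases)
  case (enqueue R)
  then have "dd S z = d z" using inv unfolding queue_inv_def by simp
  then have "enat (Suc k) \<le> d z" using enqueue w(1) by (simp add: eSuc_enat[symmetric] eSuc_plus_1)
  then have "new_walk_to (Suc k) z" using new_walk_to_extend w(2) e by blast
  moreover have "queue_inv R" using inv enqueue unfolding queue_inv_def by auto
  moreover have "pending (Suc k) R = pending (Suc k) S" using enqueue unfolding pending_def by simp
  ultimately show ?thesis using enqueue queue_inv_enq pending_enq_le by metis
next
  case skip
  then show ?thesis using inv unfolding queue_inv_def pending_def by simp
qed

lemma process_step:
  assumes inv: "queue_inv S" and w: "new_walk_to k w"
  shows "queue_inv (process E' k w S)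
    \<and> cost (process E' k w S) + pending (Suc k) (process E' k w S) + scan_credit S
      \<le> cost S + pending (Suc k) S + 1 + scan_credit (process E' k w S)"
proof (cases "col S w = Black")
  case True
  then show ?thesis using inv unfolding process_def queue_inv_def pending_def scan_credit_def by simp
next
  case False
  define S0 where "S0 = S\<lparr>cost := cost S + 1, col := (col S)(w := Black), dd := (dd S)(w := enat k),
    pr := (pr S)(w := {}), sg := (sg S)(w := 0)\<rparr>"
  have process: "process E' k w S = fold (scan k w) (neighbors E' w) S0"
    using False unfolding process_def S0_def by simp
  have inv0: "queue_inv S0"
    using inv new_walk_to_affected[OF w] unfolding queue_inv_def S0_def by auto
  have scans: "(queue_inv (process E' k w S) \<and> dd (process E' k w S) w = enat k)
    \<and> cost (process E' k w S) + pending (Suc k) (process E' k w S) + 0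
      \<le> cost S0 + pending (Suc k) S0 + 2 * length (neighbors E' w) + 0"
    unfolding process
  proof (rule fold_amortized[where I = "\<lambda>T. queue_inv T \<and> dd T w = enat k"
      and a = "\<lambda>T. cost T + pending (Suc k) T" and b = "\<lambda>_. 0"])
    fix z T assume "z \<in> set (neighbors E' w)" "queue_inv T \<and> dd T w = enat k"
    then show "(queue_inv (scan k w z T) \<and> dd (scan k w z T) w = enat k)
      \<and> cost (scan k w z T) + pending (Suc k) (scan k w z T) + 0 \<le> cost T + pending (Suc k) T + 2 + 0"
      using scan_step[of T w k z] scan_simps set_neighbors w by auto
  qed (use inv0 in \<open>simp add: S0_def\<close>)
  have "{x. col (process E' k w S) x = Black} = insert w {x. col S x = Black}"
    unfolding process by (auto simp: Black_fold_scan S0_def)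
  then have "scan_credit (process E' k w S) = 2 * length (neighbors E' w) + scan_credit S"
    using finite_Black[OF inv] False unfolding scan_credit_def by simp
  moreover have "pending (Suc k) S0 = pending (Suc k) S" "cost S0 = cost S + 1"
    unfolding pending_def S0_def by simp_all
  ultimately show ?thesis using scans by simp
qed

lemma level_step:
  assumes inv: "queue_inv S" and k: "k < dmax"
  shows "queue_inv (level E' k S)
    \<and> cost (level E' k S) + pending (Suc k) (level E' k S) + scan_credit S
      \<le> cost S + 1 + pending k S + scan_credit (level E' k S)"
proof -
  let ?S1 = "S\<lparr>cost := cost S + 1\<rparr>"
  define S' where "S' = fold (process E' k) (qs S k) ?S1"
  have level: "level E' k S = S'\<lparr>qs := (qs S')(k := [])\<rparr>"
    unfolding level_def S'_def Let_def by simp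
  have queued: "\<forall>w \<in> set (qs S k). new_walk_to k w" using inv unfolding queue_inv_def by simp
  have "queue_inv S' \<and> cost S' + pending (Suc k) S' + scan_credit ?S1
      \<le> cost ?S1 + pending (Suc k) ?S1 + 1 * length (qs S k) + scan_credit S'"
    unfolding S'_def
  proof (rule fold_amortized[where I = queue_inv and a = "\<lambda>T. cost T + pending (Suc k) T"
        and b = scan_credit])
    show "queue_inv ?S1" using inv unfolding queue_inv_def by simp
  qed (use queued process_step in blast)
  moreover have "pending k S = length (qs S k) + pending (Suc k) S"
    using k unfolding pending_def by (simp add: sum.atLeast_Suc_lessThan)
  moreover have "pending (Suc k) (level E' k S) = pending (Suc k) S'"
    unfolding level pending_def by (rule sum.cong) auto
  moreover have "queue_inv S' \<Longrightarrow> queue_inv (level E' k S)"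
    unfolding level queue_inv_def by auto
  ultimately show ?thesis
    unfolding level by (simp add: pending_def scan_credit_def)
qed

lemma levels_bound:
  assumes "queue_inv S" "m + n \<le> dmax"
  shows "queue_inv (fold (level E') [m..<m + n] S)
    \<and> cost (fold (level E') [m..<m + n] S) + pending (m + n) (fold (level E') [m..<m + n] S)
        + scan_credit S
      \<le> cost S + n + pending m S + scan_credit (fold (level E') [m..<m + n] S)"
  using assms(2)
proof (induction n)
  case (Suc n)
  let ?T = "fold (level E') [m..<m + n] S"
  have "queue_inv ?T \<and> cost ?T + pending (m + n) ?T + scan_credit S
      \<le> cost S + n + pending m S + scan_credit ?T"
    using Suc by simp
  moreover have "queue_inv ?T \<Longrightarrow> queue_inv (level E' (m + n) ?T)
    \<and> cost (level E' (m + n) ?T) + pending (Suc (m + n)) (level E' (m + n) ?T) + scan_credit ?T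
      \<le> cost ?T + 1 + pending (m + n) ?T + scan_credit (level E' (m + n) ?T)"
    using level_step Suc.prems by simp
  ultimately show ?case by simp
qed (use assms(1) in simp)

lemma levels_cost_bound:
  assumes "queue_inv S"
  shows "queue_inv (fold (level E') [1..<dmax] S)
    \<and> cost (fold (level E') [1..<dmax] S) + scan_credit S
      \<le> cost S + dmax + pending 1 S + scan_credit (fold (level E') [1..<dmax] S)"
proof (cases "dmax = 0")
  case False
  then have "[1..<dmax] = [1..<1 + (dmax - 1)]" by simp
  then show ?thesis using levels_bound[OF assms, of 1 "dmax - 1"] False by simp arith
qed (use assms in simp)

lemma phase1_step_bound:
  assumes "e \<in> set \<beta>" "queue_inv S" "dd S = d"
  shows "queue_inv (phase1_step e S)
    \<and> cost (phase1_step e S) + pending 1 (phase1_step e S) \<le> cost S + pending 1 S + 3"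
proof -
  obtain u v where e: "e = (u, v)" by fastforce
  with assms(1) have uv: "(u, v) \<in> set \<beta>" by simp
  define S1 where "S1 = S\<lparr>cost := cost S + 1\<rparr>"
  define S2 where "S2 = (if d u < d v then enq (the_enat (d u) + 1) v S1 else S1)"
  have step: "phase1_step e S = (if d v < d u then enq (the_enat (d v) + 1) u S2 else S2)"
    unfolding e phase1_step_def Let_def S2_def S1_def assms(3) by simp
  have "queue_inv S1" "pending 1 S1 = pending 1 S"
    using assms(2) unfolding S1_def queue_inv_def pending_def by simp_all
  then have S2: "queue_inv S2" "pending 1 S2 \<le> pending 1 S + 1"
    using new_walk_to_batch_edge[of u v] uv queue_inv_enq pending_enq_le[of 1 "the_enat (d u) + 1" v S1]
    unfolding S2_def by auto
  then have "queue_inv (phase1_step e S)" "pending 1 (phase1_step e S) \<le> pending 1 S + 2"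
    using new_walk_to_batch_edge[of v u] uv queue_inv_enq pending_enq_le[of 1 "the_enat (d v) + 1" u S2]
    unfolding step by (auto intro: le_trans)
  moreover have "cost (phase1_step e S) = cost S + 1" by (simp add: phase1_step_simps)
  ultimately show ?thesis by simp
qed

lemma phase1_bound:
  assumes "queue_inv S" "dd S = d"
  shows "queue_inv (fold phase1_step \<beta> S) \<and> col (fold phase1_step \<beta> S) = col S
    \<and> cost (fold phase1_step \<beta> S) + pending 1 (fold phase1_step \<beta> S)
      \<le> cost S + pending 1 S + 3 * length \<beta>"
proof -
  have "(queue_inv (fold phase1_step \<beta> S) \<and> dd (fold phase1_step \<beta> S) = d
      \<and> col (fold phase1_step \<beta> S) = col S)
    \<and> cost (fold phase1_step \<beta> S) + pending 1 (fold phase1_step \<beta> S) + 0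
      \<le> cost S + pending 1 S + 3 * length \<beta> + 0"
    by (rule fold_amortized[where I = "\<lambda>T. queue_inv T \<and> dd T = d \<and> col T = col S"
          and a = "\<lambda>T. cost T + pending 1 T" and b = "\<lambda>_. 0"])
      (use assms phase1_step_bound in \<open>simp_all add: phase1_step_simps\<close>)
  then show ?thesis by simp
qed

lemma update_sssp_cost_bound:
  "cost (update_sssp E' \<beta> d \<sigma> P dmax) \<le> 4 * (length \<beta> + anorm V E s \<beta> + dmax)"
proof -
  define S0 where "S0 = \<lparr>col = (\<lambda>_. White), dd = d, sg = \<sigma>, pr = P, qs = (\<lambda>_. []),
    touched = {}, cost = dmax\<rparr>"
  define S1 where "S1 = fold phase1_step \<beta> S0"
  define S2 where "S2 = fold (level E') [1..<dmax] S1"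
  have cost: "cost (update_sssp E' \<beta> d \<sigma> P dmax) = cost S2 + card (touched S2)"
    unfolding update_sssp_def Let_def S2_def S1_def S0_def by simp
  have init: "queue_inv S0" "dd S0 = d"
    and S0: "pending 1 S0 = 0" "cost S0 = dmax" "col S0 = (\<lambda>_. White)"
    unfolding S0_def queue_inv_def pending_def by simp_all
  have "queue_inv S1 \<and> col S1 = col S0
      \<and> cost S1 + pending 1 S1 \<le> cost S0 + pending 1 S0 + 3 * length \<beta>"
    unfolding S1_def using init by (rule phase1_bound)
  then have S1: "queue_inv S1" "scan_credit S1 = 0" "cost S1 + pending 1 S1 \<le> dmax + 3 * length \<beta>"
    unfolding scan_credit_def using S0 by simp_all
  then have S2: "queue_inv S2" "cost S2 \<le> cost S1 + dmax + pending 1 S1 + scan_credit S2"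
    using levels_cost_bound[OF S1(1)] S1(2) unfolding S2_def by simp_all
  then have "scan_credit S2 \<le> 4 * card {e \<in> E'. e \<inter> A \<noteq> {}}"
    using sum_neighbors_le unfolding queue_inv_def scan_credit_def by fastforce
  moreover have "card (touched S2) \<le> card A"
    using S2(1) finite_A unfolding queue_inv_def by (simp add: card_mono)
  moreover have "anorm V E s \<beta> = card A + card {e \<in> E'. e \<inter> A \<noteq> {}}"
    unfolding anorm_def A_def E'_def ..
  ultimately show ?thesis using cost S1(3) S2(2) by (simp only: distrib_left)
qed

end

theorem theorem3:
  shows "\<exists>c::nat. \<forall>(V::nat set) E s \<beta> d \<sigma> P.
    finite V \<and> E \<subseteq> {{u, v} | u v. u \<in> V \<and> v \<in> V \<and> u \<noteq> v} \<and> s \<in> V \<and>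
    (\<forall>(u, v) \<in> set \<beta>. u \<in> V \<and> v \<in> V \<and> u \<noteq> v \<and> {u, v} \<notin> E) \<and>
    distinct (map (\<lambda>(u, v). {u, v}) \<beta>) \<and>
    (\<forall>v \<in> V. d v = gdist E s v \<and> \<sigma> v = nsp E s v \<and> P v = preds E s v)
    \<longrightarrow> cost (update_sssp (E \<union> batch_edges \<beta>) \<beta> d \<sigma> P (max_dist V E s))
        \<le> c * (length \<beta> + anorm V E s \<beta> + max_dist V E s)"
proof -
  text \<open>The cost does not depend on \<sigma> and P, and a repeated batch edge is only charged to
    |\<beta>|.\<close>
  have "cost (update_sssp (E \<union> batch_edges \<beta>) \<beta> d \<sigma> P (max_dist V E s))
      \<le> 4 * (length \<beta> + anorm V E s \<beta> + max_dist V E s)"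
    if "batch_insertion V E s \<beta> d" for V E s \<beta> d \<sigma> P
    using batch_insertion.update_sssp_cost_bound[OF that]
    unfolding batch_insertion.E'_def[OF that] .
  then show ?thesis by (intro exI[of _ 4] allI impI) (simp add: batch_insertion_def)
qed

end
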